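(* Let $M$ be a monoid, let $\sigma : X^+ \to M$ be a semigroup choice of generators for $M$, and let $\tau : X^* \to M$ be the unique extension of $\sigma$ to a monoid choice of generators. Then $$L_\sigma(M) = L_\tau(M) \cap \big(X \hat{X}^* \overline{X} \cup \{\epsilon\}\big),$$ and there exists a word $w \in X^+$ such that $$L_\tau(M) = \{u \in \hat{X}^* : w u \overline{w} \in L_\sigma(M)\}.$$
   Context: Maps are written on the right. $X^*$, $X^+$: free monoid (with empty word $\epsilon$) and free semigroup on $X$. Let $\overline{X} = \{\overline{x} : x \in X\}$ be new symbols, $\hat{X} = X \cup \overline{X}$, and extend $x \mapsto \overline{x}$ to an involution of $\hat{X}^*$ by $\overline{\overline{x}} = x$ and $\overline{x_1 \cdots x_n} = \overline{x_n}\cdots\overline{x_1}$. For a monoid $M$ and surjective monoid morphism $\tau : X^* \to M$, the loop automaton has vertex set $M$, for each $a \in M$, $x \in X$ an edge $a \to a(x\tau)$ labelled $x$ and an edge $a(x\tau) \to a$ labelled $\overline{x}$; the loop problem $L_\tau(M) \subseteq \hat{X}^*$ is the set of labels of paths from the identity to the identity. For a semigroup $S$ (here $S = M$ regarded as a semigroup) and surjective morphism $\sigma : X^+ \to S$, $L_\sigma(S)$ is the loop problem of $S^1$ ($S$ with a new identity adjoined, even though $M$ already has one) with respect to the unique extension $\sigma^1 : X^* \to S^1$. *)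

theory Defs
  imports Main
begin

text \<open>Letters of \<open>X\<^sup>^ = X \<union> X-bar\<close>: \<open>Pos x\<close> is x, \<open>Neg x\<close> is x-bar.\<close>
datatype 'x letter = Pos 'x | Neg 'x

fun bar_letter :: "'x letter \<Rightarrow> 'x letter" where
  "bar_letter (Pos x) = Neg x"
| "bar_letter (Neg x) = Pos x"

definition bar_word :: "'x letter list \<Rightarrow> 'x letter list" where
  "bar_word u = rev (map bar_letter u)"

definition eval_word :: "('m \<Rightarrow> 'm \<Rightarrow> 'm) \<Rightarrow> 'm \<Rightarrow> ('x \<Rightarrow> 'm) \<Rightarrow> 'x list \<Rightarrow> 'm" where
  "eval_word mult e g w = foldl (\<lambda>a x. mult a (g x)) e w"

text \<open>Paths in the loop automaton: edges a --x--> a(x tau) and a(x tau) --x-bar--> a.\<close>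
inductive path :: "('m \<Rightarrow> 'm \<Rightarrow> 'm) \<Rightarrow> ('x \<Rightarrow> 'm) \<Rightarrow> 'm \<Rightarrow> 'x letter list \<Rightarrow> 'm \<Rightarrow> bool"
  for mult g where
  path_nil: "path mult g a [] a"
| path_pos: "path mult g (mult a (g x)) u b \<Longrightarrow> path mult g a (Pos x # u) b"
| path_neg: "mult a (g x) = c \<Longrightarrow> path mult g a u b \<Longrightarrow> path mult g c (Neg x # u) b"

definition loop_lang :: "('m \<Rightarrow> 'm \<Rightarrow> 'm) \<Rightarrow> 'm \<Rightarrow> ('x \<Rightarrow> 'm) \<Rightarrow> 'x letter list set" where
  "loop_lang mult e g = {u. path mult g e u e}"

definition monoid_loop_lang :: "('x \<Rightarrow> 'm::monoid_mult) \<Rightarrow> 'x letter list set" where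
  "monoid_loop_lang g = loop_lang (*) 1 g"

text \<open>S^1: the semigroup with a new identity adjoined (None), even if it already has one.\<close>
fun adj_mult :: "'m::semigroup_mult option \<Rightarrow> 'm option \<Rightarrow> 'm option" where
  "adj_mult None y = y"
| "adj_mult (Some a) None = Some a"
| "adj_mult (Some a) (Some b) = Some (a * b)"

text \<open>Loop problem L_sigma(S) of a semigroup: loop problem of S^1 w.r.t. sigma^1.\<close>
definition semigroup_loop_lang :: "('x \<Rightarrow> 'm::semigroup_mult) \<Rightarrow> 'x letter list set" where
  "semigroup_loop_lang g = loop_lang adj_mult None (Some \<circ> g)"

definition semigroup_generates :: "('x \<Rightarrow> 'm::monoid_mult) \<Rightarrow> bool" where
  "semigroup_generates g \<longleftrightarrow> (\<forall>m. \<exists>w. w \<noteq> [] \<and> eval_word (*) 1 g w = m)"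

end

theory Submission
  imports Defs
begin

text \<open>In \<open>M\<^sup>1\<close> the adjoined identity is never the target of a positive edge nor the source of a
  negative one, so a nonempty loop at it must leave along some \<open>x\<close> and come back along
  some \<open>y\<close>-bar; collapsing the adjoined identity onto \<open>1\<close> then shows that such loops are exactly
  the loops at \<open>1\<close> in \<open>M\<close> of the same shape. For the second claim choose \<open>w \<in> X\<^sup>+\<close> evaluating
  to \<open>1\<close>: reading \<open>w\<close> and \<open>w\<close>-bar leads from \<open>1\<close> back to \<open>1\<close>, and \<open>w u w\<close>-bar has that shape.\<close>

lemma path_Nil_iff [simp]: "path m g a [] b \<longleftrightarrow> b = a"
  by (auto intro: path.intros elim: path.cases)

lemma path_Pos_Cons_iff [simp]:
  "path m g a (Pos x # u) b \<longleftrightarrow> path m g (m a (g x)) u b"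
  by (auto intro: path.intros elim: path.cases)

lemma path_Neg_Cons_iff:
  "path m g c (Neg x # u) b \<longleftrightarrow> (\<exists>a. m a (g x) = c \<and> path m g a u b)"
  by (auto intro: path.intros elim: path.cases)

lemma path_append_iff:
  "path m g a (u @ v) b \<longleftrightarrow> (\<exists>c. path m g a u c \<and> path m g c v b)"
proof (induction u arbitrary: a)
  case (Cons l u)
  then show ?case by (cases l) (auto simp: path_Neg_Cons_iff)
qed simp

lemma path_map_Pos_iff: "path m g a (map Pos w) b \<longleftrightarrow> b = eval_word m a g w"
  by (induction w arbitrary: a) (simp_all add: eval_word_def)

lemma path_bar_word_map_Pos_iff:
  "path m g c (bar_word (map Pos w)) a \<longleftrightarrow> c = eval_word m a g w"
proof (induction w arbitrary: c rule: rev_induct)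
  case Nil
  then show ?case by (auto simp: bar_word_def eval_word_def)
next
  case (snoc x w)
  then show ?case by (auto simp: bar_word_def eval_word_def path_Neg_Cons_iff)
qed

lemma conjugate_mem_loop_lang_iff:
  assumes "eval_word m e g w = e"
  shows "map Pos w @ u @ bar_word (map Pos w) \<in> loop_lang m e g \<longleftrightarrow> u \<in> loop_lang m e g"
  using assms
  by (auto simp: loop_lang_def path_append_iff path_map_Pos_iff path_bar_word_map_Pos_iff)

lemma conjugate_Pos_Neg_shape:
  assumes "w \<noteq> []"
  shows "\<exists>x v. map Pos w @ u @ bar_word (map Pos w) = Pos x # v @ [Neg x]"
proof -
  obtain x w' where "w = x # w'"
    using assms by (cases w) auto
  then have "map Pos w @ u @ bar_word (map Pos w)
      = Pos x # (map Pos w' @ u @ bar_word (map Pos w')) @ [Neg x]"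
    by (simp add: bar_word_def)
  then show ?thesis
    by blast
qed

lemma path_one_Pos_Neg_iff:
  fixes g :: "'x \<Rightarrow> 'm::monoid_mult"
  shows "path (*) g 1 (Pos x # v @ [Neg y]) 1 \<longleftrightarrow> path (*) g (g x) v (g y)"
  by (simp add: path_append_iff path_Neg_Cons_iff)

definition collapse_identity :: "'m::monoid_mult option \<Rightarrow> 'm" where
  "collapse_identity = case_option 1 id"

lemma path_adj_mult_collapse_identity:
  "path adj_mult (Some \<circ> g) a u b \<Longrightarrow>
    path (*) g (collapse_identity a) u (collapse_identity b)"
proof (induction rule: path.induct)
  case (path_pos a x u b)
  then show ?case by (cases a) (simp_all add: collapse_identity_def)
next
  case (path_neg a x c u b)
  have "collapse_identity a * g x = collapse_identity c"
    using path_neg.hyps(1) by (cases a) (auto simp: collapse_identity_def)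
  then show ?case
    using path_neg.IH by (rule path.path_neg)
qed simp

lemma path_adj_mult_Some:
  fixes g :: "'x \<Rightarrow> 'm::monoid_mult"
  shows "path (*) g a u b \<Longrightarrow> path adj_mult (Some \<circ> g) (Some a) u (Some b)"
proof (induction rule: path.induct)
  case (path_neg a x c u b)
  then have "adj_mult (Some a) ((Some \<circ> g) x) = Some c"
    by simp
  then show ?case
    using path_neg.IH by (rule path.path_neg)
qed simp_all

lemma path_adj_mult_Some_iff:
  fixes g :: "'x \<Rightarrow> 'm::monoid_mult"
  shows "path adj_mult (Some \<circ> g) (Some a) u (Some b) \<longleftrightarrow> path (*) g a u b"
  using path_adj_mult_collapse_identity[of g "Some a" u "Some b"] path_adj_mult_Some
  by (auto simp: collapse_identity_def)

lemma adj_mult_Some_neq_None: "adj_mult a (Some y) \<noteq> None"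
  by (cases a) auto

lemma path_adj_mult_None_Pos_Neg_iff:
  fixes g :: "'x \<Rightarrow> 'm::monoid_mult"
  shows "path adj_mult (Some \<circ> g) None (Pos x # v @ [Neg y]) None \<longleftrightarrow> path (*) g (g x) v (g y)"
proof -
  have "path adj_mult (Some \<circ> g) c [Neg y] None \<longleftrightarrow> c = Some (g y)" for c
    by (auto simp: path_Neg_Cons_iff)
  then show ?thesis
    by (simp add: path_append_iff path_adj_mult_Some_iff)
qed

lemma path_adj_mult_None_loop_shape:
  assumes "path adj_mult (Some \<circ> g) None u None" and "u \<noteq> []"
  shows "\<exists>x y v. u = Pos x # v @ [Neg y]"
proof -
  obtain l u' where u: "u = l # u'"
    using assms(2) by (cases u) auto
  obtain x where l: "l = Pos x"
    using assms(1) by (cases l) (auto simp: u path_Neg_Cons_iff adj_mult_Some_neq_None)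
  then have "u' \<noteq> []"
    using assms(1) by (auto simp: u)
  then obtain v l' where u': "u' = v @ [l']"
    by (cases u' rule: rev_cases) auto
  obtain y where "l' = Neg y"
    using assms(1)
    by (cases l') (auto simp: u l u' path_append_iff adj_mult_Some_neq_None[symmetric])
  then show ?thesis
    using u l u' by blast
qed

lemma mem_semigroup_loop_lang_iff:
  fixes g :: "'x \<Rightarrow> 'm::monoid_mult"
  shows "u \<in> semigroup_loop_lang g \<longleftrightarrow>
    u = [] \<or> (\<exists>x y v. u = Pos x # v @ [Neg y] \<and> path (*) g (g x) v (g y))"
  using path_adj_mult_None_loop_shape[of g u]
  by (auto simp: semigroup_loop_lang_def loop_lang_def
      simp flip: path_adj_mult_None_Pos_Neg_iff simp del: path_Pos_Cons_iff)

lemma semigroup_loop_lang_eq: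
  fixes g :: "'x \<Rightarrow> 'm::monoid_mult"
  shows "semigroup_loop_lang g =
           monoid_loop_lang g \<inter> ({u. \<exists>x y v. u = Pos x # v @ [Neg y]} \<union> {[]})"
  by (auto simp: mem_semigroup_loop_lang_iff monoid_loop_lang_def loop_lang_def
      simp flip: path_one_Pos_Neg_iff simp del: path_Pos_Cons_iff)

theorem proposition4p7:
  fixes g :: "'x \<Rightarrow> 'm::monoid_mult"
  assumes "semigroup_generates g"
  shows "semigroup_loop_lang g =
           monoid_loop_lang g \<inter>
             ({u. \<exists>x y v. u = Pos x # v @ [Neg y]} \<union> {[]})
         \<and> (\<exists>w::'x list. w \<noteq> [] \<and>
           monoid_loop_lang g =
             {u. map Pos w @ u @ bar_word (map Pos w) \<in> semigroup_loop_lang g})"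
proof
  show "semigroup_loop_lang g =
          monoid_loop_lang g \<inter> ({u. \<exists>x y v. u = Pos x # v @ [Neg y]} \<union> {[]})"
    by (rule semigroup_loop_lang_eq)
  obtain w where "w \<noteq> []" and w_one: "eval_word (*) 1 g w = 1"
    using assms unfolding semigroup_generates_def by blast
  have "map Pos w @ u @ bar_word (map Pos w) \<in> semigroup_loop_lang g \<longleftrightarrow> u \<in> monoid_loop_lang g"
    for u
  proof -
    have "map Pos w @ u @ bar_word (map Pos w) \<in> semigroup_loop_lang g \<longleftrightarrow>
        map Pos w @ u @ bar_word (map Pos w) \<in> monoid_loop_lang g"
      using conjugate_Pos_Neg_shape[OF \<open>w \<noteq> []\<close>, of u]
      unfolding semigroup_loop_lang_eq by blast
    also have "\<dots> \<longleftrightarrow> u \<in> monoid_loop_lang g"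
      unfolding monoid_loop_lang_def by (rule conjugate_mem_loop_lang_iff[OF w_one])
    finally show ?thesis .
  qed
  then show "\<exists>w::'x list. w \<noteq> [] \<and>
      monoid_loop_lang g = {u. map Pos w @ u @ bar_word (map Pos w) \<in> semigroup_loop_lang g}"
    using \<open>w \<noteq> []\<close> by blast
qed

end
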